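(* Let $Q\in N_\kappa(\mathcal{H})$ be minimally represented by a triple $(\mathcal{K},A,\Gamma)$ and let $\Gamma_z:=(I+(z-z_0)(A-z)^{-1})\Gamma$. If there exist $z_0'\in\mathcal{D}(Q)$ and $0\neq h\in\mathcal{H}$ such that $$\frac{Q(z_0')-Q(\bar w)}{z_0'-\bar w}h=0\quad\text{for all } w\in\mathcal{D}(Q),$$ then $\Gamma_zh=0$ for all $z\in\mathcal{D}(Q)$.
   Context: $N_\kappa(\mathcal{H})$: operator functions meromorphic in $\mathbb{C}\setminus\mathbb{R}$ with $Q(\bar z)^*=Q(z)$ and kernel $\frac{Q(z)-Q(w)^*}{z-\bar w}$ having exactly $\kappa$ negative squares. Minimal representation: $Q(z)=Q(z_0)^*+(z-\bar z_0)\Gamma^+(I+(z-z_0)(A-z)^{-1})\Gamma$ with $A$ a self-adjoint relation in a Pontryagin space $\mathcal{K}$, $\Gamma:\mathcal{H}\to\mathcal{K}$ bounded, and $\mathcal{K}=\overline{\mathrm{span}}\{\Gamma_zh\}$; then $\rho(A)=\mathcal{D}(Q)$ and $[\Gamma_zh,\Gamma_wg]=(\frac{Q(z)-Q(\bar w)}{z-\bar w}h,g)$ (read as $Q'(z)$ when $z=\bar w$). *)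

theory Defs
  imports "HOL-Complex_Analysis.Complex_Analysis" "Jordan_Normal_Form.Char_Poly"
begin

definition hermitian_form :: "(complex \<Rightarrow> 'a::ab_group_add \<Rightarrow> 'a) \<Rightarrow> ('a \<Rightarrow> 'a \<Rightarrow> complex) \<Rightarrow> bool" where
  "hermitian_form sc ip \<longleftrightarrow>
     (\<forall>x y z. ip (x + y) z = ip x z + ip y z) \<and>
     (\<forall>a x y. ip (sc a x) y = a * ip x y) \<and>
     (\<forall>x y. ip y x = cnj (ip x y))"

definition inorm :: "('a \<Rightarrow> 'a \<Rightarrow> complex) \<Rightarrow> 'a \<Rightarrow> real" where
  "inorm ip x = sqrt (Re (ip x x))"

definition hilbert_space :: "(complex \<Rightarrow> 'a::ab_group_add \<Rightarrow> 'a) \<Rightarrow> ('a \<Rightarrow> 'a \<Rightarrow> complex) \<Rightarrow> bool" where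
  "hilbert_space sc ip \<longleftrightarrow>
     vector_space sc \<and> hermitian_form sc ip \<and>
     (\<forall>x. 0 \<le> Re (ip x x)) \<and> (\<forall>x. ip x x = 0 \<longrightarrow> x = 0) \<and>
     (\<forall>X. (\<forall>e>0. \<exists>N. \<forall>m\<ge>N. \<forall>n\<ge>N. inorm ip (X m - X n) < e)
          \<longrightarrow> (\<exists>L. (\<lambda>n. inorm ip (X n - L)) \<longlonglongrightarrow> 0))"

text \<open>Pontryagin space: an indefinite inner product space with a fundamental symmetry J
  such that [J.,.] is a Hilbert space inner product and the negative part
  (the -1 eigenspace of J) is finite dimensional.  Its topology is the J-norm topology.\<close>
definition pontryagin_space :: "(complex \<Rightarrow> 'a::ab_group_add \<Rightarrow> 'a) \<Rightarrow> ('a \<Rightarrow> 'a \<Rightarrow> complex) \<Rightarrow> ('a \<Rightarrow> 'a) \<Rightarrow> bool" where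
  "pontryagin_space sc ip J \<longleftrightarrow>
     vector_space sc \<and> hermitian_form sc ip \<and> Vector_Spaces.linear sc sc J \<and>
     (\<forall>x. J (J x) = x) \<and> (\<forall>x y. ip (J x) y = ip x (J y)) \<and>
     hilbert_space sc (\<lambda>x y. ip (J x) y) \<and>
     (\<exists>B. finite B \<and> {x. J x = - x} \<subseteq> module.span sc B)"

definition bounded_op :: "(complex \<Rightarrow> 'a::ab_group_add \<Rightarrow> 'a) \<Rightarrow> ('a \<Rightarrow> 'a \<Rightarrow> complex)
    \<Rightarrow> (complex \<Rightarrow> 'b::ab_group_add \<Rightarrow> 'b) \<Rightarrow> ('b \<Rightarrow> 'b \<Rightarrow> complex) \<Rightarrow> ('a \<Rightarrow> 'b) \<Rightarrow> bool" where
  "bounded_op sa ipa sb ipb T \<longleftrightarrow>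
     Vector_Spaces.linear sa sb T \<and> (\<exists>C. \<forall>x. inorm ipb (T x) \<le> C * inorm ipa x)"

definition op_adjoint :: "('a \<Rightarrow> 'a \<Rightarrow> complex) \<Rightarrow> ('b \<Rightarrow> 'b \<Rightarrow> complex) \<Rightarrow> ('a \<Rightarrow> 'b) \<Rightarrow> 'b \<Rightarrow> 'a" where
  "op_adjoint ipa ipb T y = (THE u. \<forall>x. ipb (T x) y = ipa x u)"

definition rel_adjoint :: "('a \<Rightarrow> 'a \<Rightarrow> complex) \<Rightarrow> ('a \<times> 'a) set \<Rightarrow> ('a \<times> 'a) set" where
  "rel_adjoint ip A = {(f, g). \<forall>(u, v) \<in> A. ip g u = ip f v}"

definition selfadjoint_relation :: "('a \<Rightarrow> 'a \<Rightarrow> complex) \<Rightarrow> ('a \<times> 'a) set \<Rightarrow> bool" where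
  "selfadjoint_relation ip A \<longleftrightarrow> A = rel_adjoint ip A"

text \<open>(A - z)^{-1} as a relation.\<close>
definition rel_resolvent_rel :: "(complex \<Rightarrow> 'a::ab_group_add \<Rightarrow> 'a) \<Rightarrow> ('a \<times> 'a) set \<Rightarrow> complex \<Rightarrow> ('a \<times> 'a) set" where
  "rel_resolvent_rel sc A z = {(g - sc z f, f) | f g. (f, g) \<in> A}"

definition resolvent_set :: "(complex \<Rightarrow> 'a::ab_group_add \<Rightarrow> 'a) \<Rightarrow> ('a \<Rightarrow> 'a \<Rightarrow> complex) \<Rightarrow> ('a \<Rightarrow> 'a)
    \<Rightarrow> ('a \<times> 'a) set \<Rightarrow> complex set" where
  "resolvent_set sc ip J A = {z. \<exists>R. bounded_op sc (\<lambda>x y. ip (J x) y) sc (\<lambda>x y. ip (J x) y) R \<and>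
       (\<forall>x y. (x, y) \<in> rel_resolvent_rel sc A z \<longleftrightarrow> y = R x)}"

definition resolvent :: "(complex \<Rightarrow> 'a::ab_group_add \<Rightarrow> 'a) \<Rightarrow> ('a \<times> 'a) set \<Rightarrow> complex \<Rightarrow> 'a \<Rightarrow> 'a" where
  "resolvent sc A z x = (THE y. (x, y) \<in> rel_resolvent_rel sc A z)"

text \<open>D(Q): the points near which Q is (weakly) holomorphic.\<close>
definition holo_dom :: "('h \<Rightarrow> 'h \<Rightarrow> complex) \<Rightarrow> (complex \<Rightarrow> 'h \<Rightarrow> 'h) \<Rightarrow> complex set" where
  "holo_dom ip Q = {z. \<exists>U. open U \<and> z \<in> U \<and> (\<forall>h g. (\<lambda>w. ip (Q w h) g) holomorphic_on U)}"

definition op_pole_at :: "('h \<Rightarrow> 'h \<Rightarrow> complex) \<Rightarrow> (complex \<Rightarrow> 'h \<Rightarrow> 'h) \<Rightarrow> complex \<Rightarrow> bool" where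
  "op_pole_at ip Q z \<longleftrightarrow> (\<exists>n::nat. \<exists>U. open U \<and> z \<in> U \<and>
      (\<forall>h g. \<exists>f. f holomorphic_on U \<and> (\<forall>w\<in>U - {z}. f w = (w - z) ^ n * ip (Q w h) g)))"

text \<open>(N_Q(z,w) h, g) with N_Q(z,w) = (Q(z) - Q(w)^*)/(z - conj w), Q(w)^* = Q(conj w),
  read as Q'(z) when z = conj w.\<close>
definition kerQ :: "('h::ab_group_add \<Rightarrow> 'h \<Rightarrow> complex) \<Rightarrow> (complex \<Rightarrow> 'h \<Rightarrow> 'h) \<Rightarrow> complex \<Rightarrow> complex \<Rightarrow> 'h \<Rightarrow> 'h \<Rightarrow> complex" where
  "kerQ ip Q z w h g =
     (if z = cnj w then deriv (\<lambda>u. ip (Q u h) g) z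
      else ip (Q z h - Q (cnj w) h) g / (z - cnj w))"

definition neg_eig_count :: "complex mat \<Rightarrow> nat" where
  "neg_eig_count M = (\<Sum>r\<in>{r::real. r < 0 \<and> poly (char_poly M) (complex_of_real r) = 0}.
                        order (complex_of_real r) (char_poly M))"

definition gram :: "('h::ab_group_add \<Rightarrow> 'h \<Rightarrow> complex) \<Rightarrow> (complex \<Rightarrow> 'h \<Rightarrow> 'h) \<Rightarrow> nat \<Rightarrow> (nat \<Rightarrow> complex) \<Rightarrow> (nat \<Rightarrow> 'h) \<Rightarrow> complex mat" where
  "gram ip Q n zs hs = mat n n (\<lambda>(i, j). kerQ ip Q (zs i) (zs j) (hs i) (hs j))"

definition kernel_neg_squares :: "('h::ab_group_add \<Rightarrow> 'h \<Rightarrow> complex) \<Rightarrow> (complex \<Rightarrow> 'h \<Rightarrow> 'h) \<Rightarrow> nat \<Rightarrow> bool" where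
  "kernel_neg_squares ip Q \<kappa> \<longleftrightarrow>
     (\<forall>n zs hs. (\<forall>i<n. zs i \<in> holo_dom ip Q) \<longrightarrow> neg_eig_count (gram ip Q n zs hs) \<le> \<kappa>) \<and>
     (\<exists>n zs hs. (\<forall>i<n. zs i \<in> holo_dom ip Q) \<and> neg_eig_count (gram ip Q n zs hs) = \<kappa>)"

definition N_kappa :: "(complex \<Rightarrow> 'h::ab_group_add \<Rightarrow> 'h) \<Rightarrow> ('h \<Rightarrow> 'h \<Rightarrow> complex) \<Rightarrow> nat \<Rightarrow> (complex \<Rightarrow> 'h \<Rightarrow> 'h) \<Rightarrow> bool" where
  "N_kappa sc ip \<kappa> Q \<longleftrightarrow>
     (\<forall>z\<in>holo_dom ip Q. bounded_op sc ip sc ip (Q z)) \<and>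
     (\<forall>z. Im z \<noteq> 0 \<longrightarrow> z \<notin> holo_dom ip Q \<longrightarrow> op_pole_at ip Q z) \<and>
     (\<forall>z\<in>holo_dom ip Q. cnj z \<in> holo_dom ip Q \<and> (\<forall>h g. ip (Q z h) g = ip h (Q (cnj z) g))) \<and>
     kernel_neg_squares ip Q \<kappa>"

definition Gamma_z :: "(complex \<Rightarrow> 'k::ab_group_add \<Rightarrow> 'k) \<Rightarrow> ('k \<times> 'k) set \<Rightarrow> ('h \<Rightarrow> 'k) \<Rightarrow> complex \<Rightarrow> complex \<Rightarrow> 'h \<Rightarrow> 'k" where
  "Gamma_z scK A \<Gamma> z0 z h = \<Gamma> h + scK (z - z0) (resolvent scK A z (\<Gamma> h))"

definition minimal_representation ::
  "(complex \<Rightarrow> 'h::ab_group_add \<Rightarrow> 'h) \<Rightarrow> ('h \<Rightarrow> 'h \<Rightarrow> complex) \<Rightarrow> (complex \<Rightarrow> 'h \<Rightarrow> 'h) \<Rightarrow>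
   (complex \<Rightarrow> 'k::ab_group_add \<Rightarrow> 'k) \<Rightarrow> ('k \<Rightarrow> 'k \<Rightarrow> complex) \<Rightarrow> ('k \<Rightarrow> 'k) \<Rightarrow>
   ('k \<times> 'k) set \<Rightarrow> ('h \<Rightarrow> 'k) \<Rightarrow> complex \<Rightarrow> bool" where
  "minimal_representation scH ipH Q scK ipK J A \<Gamma> z0 \<longleftrightarrow>
     pontryagin_space scK ipK J \<and>
     selfadjoint_relation ipK A \<and>
     bounded_op scH ipH scK (\<lambda>x y. ipK (J x) y) \<Gamma> \<and>
     z0 \<in> resolvent_set scK ipK J A \<and>
     (\<forall>z\<in>resolvent_set scK ipK J A. \<forall>h.
        Q z h = op_adjoint ipH ipH (Q z0) h
                + scH (z - cnj z0) (op_adjoint ipH ipK \<Gamma> (Gamma_z scK A \<Gamma> z0 z h))) \<and>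
     (\<forall>x. \<forall>e>0. \<exists>y \<in> module.span scK {Gamma_z scK A \<Gamma> z0 z h | z h. z \<in> resolvent_set scK ipK J A}.
        inorm (\<lambda>x y. ipK (J x) y) (x - y) < e) \<and>
     resolvent_set scK ipK J A = holo_dom ipH Q"

end

theory Submission
  imports Defs
begin

(* If N_Q(z0', w) h = 0 for every w in D(Q), then (Q(u) h, g) does not depend on u in D(Q).
   By the kernel identity (z - conj w) [Gamma_z h, Gamma_w g] = ((Q(z) - Q(conj w)) h, g),
   Gamma_z h is therefore orthogonal to Gamma_w g whenever z <> conj w; as
   u |-> [Gamma_z h, Gamma_(conj u) g] is continuous (the resolvent is locally bounded),
   this extends to w = conj z.  Minimality makes the vectors Gamma_w g span a dense subspace,
   so Gamma_z h is orthogonal to the whole Pontryagin space and vanishes by nondegeneracy.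
   Reading off inner products from the representation of Q needs the adjoint of Gamma to
   exist, which is the Riesz representation theorem in H. *)

section \<open>Hermitian forms and the Riesz representation theorem\<close>

locale sesquilinear_form = vector_space sc for sc :: "complex \<Rightarrow> 'a::ab_group_add \<Rightarrow> 'a" +
  fixes ip :: "'a \<Rightarrow> 'a \<Rightarrow> complex"
  assumes hermitian: "hermitian_form sc ip"
begin

lemma inner_add_left: "ip (x + y) z = ip x z + ip y z"
  using hermitian unfolding hermitian_form_def by blast

lemma inner_scale_left: "ip (sc a x) y = a * ip x y"
  using hermitian unfolding hermitian_form_def by blast

lemma inner_commute: "ip y x = cnj (ip x y)"
  using hermitian unfolding hermitian_form_def by blast

lemma inner_add_right: "ip x (y + z) = ip x y + ip x z"
  using inner_commute[of x] inner_commute[of y x] inner_commute[of z x]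
  by (simp add: inner_add_left)

lemma inner_scale_right: "ip x (sc a y) = cnj a * ip x y"
  using inner_commute[of x] inner_commute[of y x] by (simp add: inner_scale_left)

lemma inner_zero_right [simp]: "ip x 0 = 0"
  using inner_scale_right[of x 0 0] by simp

lemma inner_diff_left: "ip (x - y) z = ip x z - ip y z"
  using inner_add_left[of x "- y" z] inner_scale_left[of "-1" y z] by simp

lemma inner_diff_right: "ip x (y - z) = ip x y - ip x z"
  using inner_add_right[of x y "- z"] inner_scale_right[of x "-1" z] by simp

lemma inner_self_of_real: "ip x x = of_real (Re (ip x x))"
  using arg_cong[OF inner_commute[of x x], of Im] by (simp add: complex_eq_iff)

lemma inner_self_parallelogram:
  "ip (x - y) (x - y) + ip (x + y) (x + y) = 2 * ip x x + 2 * ip y y"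
  by (simp add: inner_add_left inner_add_right inner_diff_left inner_diff_right)

lemma Re_inner_self_add_scale:
  "Re (ip (x + sc t y) (x + sc t y)) =
     Re (ip x x) + 2 * Re (cnj t * ip x y) + (cmod t)\<^sup>2 * Re (ip y y)"
proof -
  have "ip (x + sc t y) (x + sc t y) =
      ip x x + cnj t * ip x y + cnj (cnj t * ip x y) + (t * cnj t) * ip y y"
    using inner_commute[of x y]
    by (simp add: inner_add_left inner_add_right inner_scale_left inner_scale_right algebra_simps)
  moreover have "(t * cnj t) * ip y y = of_real ((cmod t)\<^sup>2 * Re (ip y y))"
    using complex_norm_square[of t] inner_self_of_real[of y] by (metis of_real_mult)
  ultimately show ?thesis by simp
qed

lemma Re_inner_self_shift:
  "Re (ip (x + sc (- (of_real r * ip x y)) y) (x + sc (- (of_real r * ip x y)) y)) =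
     Re (ip x x) - 2 * r * (cmod (ip x y))\<^sup>2 + r\<^sup>2 * (cmod (ip x y))\<^sup>2 * Re (ip y y)"
proof -
  have "cnj (- (of_real r * ip x y)) * ip x y = of_real (- r * (cmod (ip x y))\<^sup>2)"
    using complex_norm_square[of "ip x y"] by (simp add: algebra_simps)
  then have "Re (cnj (- (of_real r * ip x y)) * ip x y) = - r * (cmod (ip x y))\<^sup>2"
    by (metis Re_complex_of_real)
  moreover have "(cmod (- (of_real r * ip x y)))\<^sup>2 = r\<^sup>2 * (cmod (ip x y))\<^sup>2"
    by (simp add: norm_mult power_mult_distrib)
  ultimately show ?thesis
    unfolding Re_inner_self_add_scale by simp
qed

end

lemma le_mult_if_quadratic_nonneg:
  fixes a q b :: real
  assumes quadratic: "\<And>r. 0 \<le> a - 2 * r * q + r\<^sup>2 * q * b" and "0 \<le> q" "0 \<le> b"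
  shows "q \<le> a * b"
proof (cases "b = 0")
  case True
  show ?thesis
  proof (rule ccontr)
    assume "\<not> q \<le> a * b"
    with True have "0 < q" by simp
    with True quadratic[of "(a + 1) / (2 * q)"] show False by (simp add: field_simps)
  qed
next
  case False
  with assms have "0 < b" by simp
  moreover have "0 \<le> a - 2 * (1 / b) * q + (1 / b)\<^sup>2 * q * b" by (rule quadratic)
  ultimately show ?thesis by (simp add: field_simps power2_eq_square)
qed

locale positive_form = sesquilinear_form +
  assumes Re_inner_self_nonneg: "0 \<le> Re (ip x x)"
begin

abbreviation nrm :: "'a \<Rightarrow> real" where "nrm \<equiv> inorm ip"

lemma nrm_nonneg: "0 \<le> nrm x"
  by (simp add: inorm_def Re_inner_self_nonneg)

lemma power2_nrm_eq_inner: "(nrm x)\<^sup>2 = Re (ip x x)"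
  using Re_inner_self_nonneg[of x] by (simp add: inorm_def)

lemma Cauchy_Schwarz_ineq: "cmod (ip x y) \<le> nrm x * nrm y"
proof -
  have "(cmod (ip x y))\<^sup>2 \<le> Re (ip x x) * Re (ip y y)"
  proof (rule le_mult_if_quadratic_nonneg)
    fix r
    show "0 \<le> Re (ip x x) - 2 * r * (cmod (ip x y))\<^sup>2 + r\<^sup>2 * (cmod (ip x y))\<^sup>2 * Re (ip y y)"
      using Re_inner_self_nonneg Re_inner_self_shift by metis
  qed (simp_all add: Re_inner_self_nonneg)
  then have "cmod (ip x y) \<le> sqrt (Re (ip x x) * Re (ip y y))"
    by (simp add: real_le_rsqrt)
  then show ?thesis
    by (simp add: inorm_def real_sqrt_mult)
qed

lemma nrm_triangle_ineq: "nrm (x + y) \<le> nrm x + nrm y"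
proof -
  have "(nrm (x + y))\<^sup>2 = Re (ip x x) + 2 * Re (ip x y) + Re (ip y y)"
    using Re_inner_self_add_scale[of x 1 y] by (simp add: power2_nrm_eq_inner)
  also have "\<dots> \<le> (nrm x)\<^sup>2 + 2 * (nrm x * nrm y) + (nrm y)\<^sup>2"
    using Cauchy_Schwarz_ineq[of x y] complex_Re_le_cmod[of "ip x y"]
    by (simp add: power2_nrm_eq_inner)
  also have "\<dots> = (nrm x + nrm y)\<^sup>2"
    by (simp add: power2_eq_square algebra_simps)
  finally show ?thesis
    using nrm_nonneg by (meson add_nonneg_nonneg power2_le_imp_le)
qed

lemma nrm_scale: "nrm (sc a x) = cmod a * nrm x"
proof -
  have "ip (sc a x) (sc a x) = of_real ((cmod a)\<^sup>2 * Re (ip x x))"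
    using complex_norm_square[of a] inner_self_of_real[of x]
    by (simp add: inner_scale_left inner_scale_right mult.assoc[symmetric])
  then show ?thesis
    by (simp add: inorm_def real_sqrt_mult)
qed

lemma nrm_minus_commute: "nrm (x - y) = nrm (y - x)"
  using nrm_scale[of "-1" "x - y"] by simp

lemma inner_eq_0_if_Re_inner_self_min:
  assumes min: "\<And>t. Re (ip x x) \<le> Re (ip (x + sc t y) (x + sc t y))"
  shows "ip x y = 0"
proof -
  have "(cmod (ip x y))\<^sup>2 \<le> 0 * Re (ip y y)"
  proof (rule le_mult_if_quadratic_nonneg)
    fix r
    show "0 \<le> 0 - 2 * r * (cmod (ip x y))\<^sup>2 + r\<^sup>2 * (cmod (ip x y))\<^sup>2 * Re (ip y y)"
      using min[of "- (of_real r * ip x y)"] Re_inner_self_shift[of x r y] by simp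
  qed (simp_all add: Re_inner_self_nonneg)
  then show ?thesis by simp
qed

lemma bounded_functional_tendsto:
  assumes add: "\<And>x y. \<phi> (x + y) = \<phi> x + \<phi> y" and scale: "\<And>a x. \<phi> (sc a x) = a * \<phi> x"
    and bounded: "\<And>x. cmod (\<phi> x) \<le> C * nrm x"
    and lim: "(\<lambda>n. nrm (X n - L)) \<longlonglongrightarrow> 0"
  shows "(\<lambda>n. \<phi> (X n)) \<longlonglongrightarrow> \<phi> L"
proof -
  have "\<phi> (X n) - \<phi> L = \<phi> (X n - L)" for n
    using add[of "X n - L" L] by simp
  then have "\<forall>n. norm (\<phi> (X n) - \<phi> L) \<le> C * nrm (X n - L)"
    using bounded by simp
  moreover have "(\<lambda>n. C * nrm (X n - L)) \<longlonglongrightarrow> 0"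
    using tendsto_mult_right_zero[OF lim] .
  ultimately show ?thesis
    by (rule LIM_zero_cancel[OF Lim_null_comparison[OF always_eventually]])
qed

lemma min_sequence_Cauchy:
  assumes mid: "\<And>x y. x \<in> S \<Longrightarrow> y \<in> S \<Longrightarrow> sc (1/2) (x + y) \<in> S"
    and low: "\<And>x. x \<in> S \<Longrightarrow> D \<le> Re (ip x x)"
    and X: "\<And>k. X k \<in> S" "\<And>k. Re (ip (X k) (X k)) < D + inverse (real (Suc k))"
  shows "\<forall>e>0. \<exists>N. \<forall>m\<ge>N. \<forall>n\<ge>N. nrm (X m - X n) < e"
proof (intro allI impI)
  fix e :: real
  assume "0 < e"
  obtain N :: nat where N: "4 / e\<^sup>2 < real (Suc N)"
    using reals_Archimedean2 less_Suc_eq of_nat_less_iff by (metis less_trans)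
  have "nrm (X m - X n) < e" if "N \<le> m" "N \<le> n" for m n
  proof -
    have "4 * D \<le> Re (ip (X m + X n) (X m + X n))"
      using low[OF mid[OF X(1) X(1)], of m n] by (simp add: inner_scale_left inner_scale_right)
    moreover have "inverse (real (Suc m)) \<le> inverse (real (Suc N))"
      and "inverse (real (Suc n)) \<le> inverse (real (Suc N))"
      using that by (simp_all add: le_imp_inverse_le del: of_nat_Suc)
    moreover have "Re (ip (X m - X n) (X m - X n)) + Re (ip (X m + X n) (X m + X n)) =
        2 * Re (ip (X m) (X m)) + 2 * Re (ip (X n) (X n))"
      using arg_cong[OF inner_self_parallelogram[of "X m" "X n"], of Re] by simp
    ultimately have "Re (ip (X m - X n) (X m - X n)) < 4 * inverse (real (Suc N))"
      using X(2)[of m] X(2)[of n] by linarith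
    then have "(nrm (X m - X n))\<^sup>2 < 4 * inverse (real (Suc N))"
      by (simp add: power2_nrm_eq_inner del: of_nat_Suc)
    also have "\<dots> < e\<^sup>2"
    proof -
      have "4 < e\<^sup>2 * real (Suc N)"
        using N \<open>0 < e\<close> by (simp add: field_simps del: of_nat_Suc)
      then show ?thesis
        using \<open>0 < e\<close> by (simp add: field_simps del: of_nat_Suc)
    qed
    finally show ?thesis
      using \<open>0 < e\<close> nrm_nonneg by (meson power_less_imp_less_base less_imp_le)
  qed
  then show "\<exists>N. \<forall>m\<ge>N. \<forall>n\<ge>N. nrm (X m - X n) < e"
    by blast
qed

end

locale hilbert_form = positive_form +
  assumes inner_self_eq_0: "ip x x = 0 \<Longrightarrow> x = 0"
    and complete: "\<And>X. \<forall>e>0. \<exists>N. \<forall>m\<ge>N. \<forall>n\<ge>N. nrm (X m - X n) < e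
      \<Longrightarrow> \<exists>L. (\<lambda>n. nrm (X n - L)) \<longlonglongrightarrow> 0"
begin

lemma Re_inner_self_min_exists:
  assumes "x1 \<in> S"
    and mid: "\<And>x y. x \<in> S \<Longrightarrow> y \<in> S \<Longrightarrow> sc (1/2) (x + y) \<in> S"
    and closed: "\<And>X L. (\<And>n. X n \<in> S) \<Longrightarrow> (\<lambda>n. nrm (X n - L)) \<longlonglongrightarrow> 0 \<Longrightarrow> L \<in> S"
  obtains L where "L \<in> S" "\<And>x. x \<in> S \<Longrightarrow> Re (ip L L) \<le> Re (ip x x)"
proof -
  define D where "D = (INF x\<in>S. Re (ip x x))"
  have bdd: "bdd_below ((\<lambda>x. Re (ip x x)) ` S)"
    using Re_inner_self_nonneg by (rule bdd_belowI2)
  have low: "D \<le> Re (ip x x)" if "x \<in> S" for x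
    unfolding D_def using bdd that by (rule cINF_lower)
  have "0 \<le> D"
    unfolding D_def using \<open>x1 \<in> S\<close> Re_inner_self_nonneg by (intro cINF_greatest) auto
  have "\<exists>x\<in>S. Re (ip x x) < D + inverse (real (Suc k))" for k
    using cINF_less_iff[OF _ bdd, of "D + inverse (real (Suc k))"] \<open>x1 \<in> S\<close>
    unfolding D_def by auto
  then obtain X where X: "\<And>k. X k \<in> S" "\<And>k. Re (ip (X k) (X k)) < D + inverse (real (Suc k))"
    by metis
  obtain L where L: "(\<lambda>n. nrm (X n - L)) \<longlonglongrightarrow> 0"
    using complete[OF min_sequence_Cauchy[OF mid low X]] by blast
  have "nrm L \<le> sqrt (D + inverse (real (Suc n))) + nrm (X n - L)" for n
  proof -
    have "nrm (X n) \<le> sqrt (D + inverse (real (Suc n)))"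
      using X(2)[of n] by (simp add: inorm_def)
    then show ?thesis
      using nrm_triangle_ineq[of "X n" "L - X n"] nrm_minus_commute[of L "X n"] by simp
  qed
  moreover have "(\<lambda>n. sqrt (D + inverse (real (Suc n))) + nrm (X n - L)) \<longlonglongrightarrow> sqrt (D + 0) + 0"
    by (intro tendsto_intros L LIMSEQ_inverse_real_of_nat)
  ultimately have "nrm L \<le> sqrt D"
    by (intro LIMSEQ_le_const[OF _ exI]) auto
  then have "(nrm L)\<^sup>2 \<le> (sqrt D)\<^sup>2"
    using nrm_nonneg by (simp add: power_mono)
  then have "Re (ip L L) \<le> D"
    using \<open>0 \<le> D\<close> by (simp add: power2_nrm_eq_inner)
  with closed[OF X(1) L] low that show ?thesis
    by force
qed

lemma Riesz_representation:
  assumes add: "\<And>x y. \<phi> (x + y) = \<phi> x + \<phi> y" and scale: "\<And>a x. \<phi> (sc a x) = a * \<phi> x"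
    and bounded: "\<And>x. cmod (\<phi> x) \<le> C * nrm x"
  shows "\<exists>u. \<forall>x. \<phi> x = ip x u"
proof (cases "\<forall>x. \<phi> x = 0")
  case True
  then show ?thesis by (intro exI[of _ 0]) simp
next
  case False
  have diff: "\<phi> (x - y) = \<phi> x - \<phi> y" for x y
    using add[of x "- y"] scale[of "-1" y] by simp
  from False obtain x1 where "\<phi> x1 \<noteq> 0" by blast
  define S where "S = {x. \<phi> x = 1}"
  have "sc (1 / \<phi> x1) x1 \<in> S"
    using \<open>\<phi> x1 \<noteq> 0\<close> by (simp add: S_def scale)
  moreover have "sc (1/2) (x + y) \<in> S" if "x \<in> S" "y \<in> S" for x y
    using that by (simp add: S_def scale add)
  moreover have "L \<in> S" if "\<And>n. X n \<in> S" "(\<lambda>n. nrm (X n - L)) \<longlonglongrightarrow> 0" for X L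
    using bounded_functional_tendsto[OF add scale bounded that(2)] that(1)
    by (simp add: S_def LIMSEQ_const_iff)
  ultimately obtain L where "L \<in> S" and L_min: "\<And>x. x \<in> S \<Longrightarrow> Re (ip L L) \<le> Re (ip x x)"
    by (metis Re_inner_self_min_exists)
  have orth: "ip L y = 0" if "\<phi> y = 0" for y
    using \<open>L \<in> S\<close> that by (intro inner_eq_0_if_Re_inner_self_min L_min) (simp add: S_def add scale)
  have "ip L L \<noteq> 0"
    using \<open>L \<in> S\<close> inner_self_eq_0 scale[of 0 0] by (force simp: S_def)
  show ?thesis
  proof (intro exI allI)
    fix x
    have "\<phi> (x - sc (\<phi> x) L) = 0"
      using \<open>L \<in> S\<close> by (simp add: S_def diff scale)
    then have "ip (x - sc (\<phi> x) L) L = 0"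
      using orth inner_commute by (metis complex_cnj_zero)
    then have "ip x L = \<phi> x * ip L L"
      by (simp add: inner_diff_left inner_scale_left)
    with \<open>ip L L \<noteq> 0\<close> show "\<phi> x = ip x (sc (cnj (inverse (ip L L))) L)"
      by (simp add: inner_scale_right)
  qed
qed

end

section \<open>Self-adjoint relations in Pontryagin spaces\<close>

lemma hilbert_space_imp_hilbert_form:
  assumes "hilbert_space sc ip"
  shows "hilbert_form sc ip"
  using assms
  by (simp add: hilbert_space_def hilbert_form_def hilbert_form_axioms_def positive_form_def
      positive_form_axioms_def sesquilinear_form_def sesquilinear_form_axioms_def)

locale pontryagin = sesquilinear_form sc ip for sc :: "complex \<Rightarrow> 'a::ab_group_add \<Rightarrow> 'a" and ip +
  fixes J :: "'a \<Rightarrow> 'a"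
  assumes pontryagin_space: "pontryagin_space sc ip J"
begin

lemma J_involutive: "J (J x) = x"
  using pontryagin_space unfolding pontryagin_space_def by blast

lemma inner_J_commute: "ip (J x) y = ip x (J y)"
  using pontryagin_space unfolding pontryagin_space_def by blast

sublocale J: hilbert_form sc "\<lambda>x y. ip (J x) y"
proof (rule hilbert_space_imp_hilbert_form)
  show "hilbert_space sc (\<lambda>x y. ip (J x) y)"
    using pontryagin_space unfolding pontryagin_space_def by blast
qed

lemma J_nrm_J: "J.nrm (J x) = J.nrm x"
  unfolding inorm_def using inner_J_commute[of x x] by (simp add: J_involutive)

lemma inner_bound: "cmod (ip x y) \<le> J.nrm x * J.nrm y"
  using J.Cauchy_Schwarz_ineq[of "J x" y] by (simp add: J_involutive J_nrm_J)

lemma eq_0_if_inner_J_eq_0: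
  assumes "ip x (J x) = 0"
  shows "x = 0"
  using assms inner_J_commute[of x x] J.inner_self_eq_0 by simp

end

locale selfadjoint_rel = pontryagin sc ip J for sc :: "complex \<Rightarrow> 'a::ab_group_add \<Rightarrow> 'a" and ip J +
  fixes A :: "('a \<times> 'a) set"
  assumes selfadjoint: "selfadjoint_relation ip A"
begin

lemma mem_A_iff: "(f, g) \<in> A \<longleftrightarrow> (\<forall>(u, v) \<in> A. ip g u = ip f v)"
proof -
  have A_eq: "A = rel_adjoint ip A"
    using selfadjoint unfolding selfadjoint_relation_def .
  have "(f, g) \<in> rel_adjoint ip A \<longleftrightarrow> (\<forall>(u, v) \<in> A. ip g u = ip f v)"
    unfolding rel_adjoint_def by simp
  then show ?thesis
    by (subst (1) A_eq)
qed

lemma inner_mem_A: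
  assumes "(f, g) \<in> A" "(u, v) \<in> A"
  shows "ip g u = ip f v"
  using mem_A_iff[THEN iffD1, OF assms(1)] assms(2) by fast

lemma diff_mem_A:
  assumes "(f1, g1) \<in> A" "(f2, g2) \<in> A"
  shows "(f1 - f2, g1 - g2) \<in> A"
proof (rule mem_A_iff[THEN iffD2], safe)
  fix u v
  assume "(u, v) \<in> A"
  then show "ip (g1 - g2) u = ip (f1 - f2) v"
    using assms by (simp add: inner_diff_left inner_mem_A)
qed

abbreviation rho :: "complex set" where "rho \<equiv> resolvent_set sc ip J A"

abbreviation R :: "complex \<Rightarrow> 'a \<Rightarrow> 'a" where "R \<equiv> resolvent sc A"

lemma resolvent_setE:
  assumes "z \<in> rho"
  obtains "bounded_op sc (\<lambda>x y. ip (J x) y) sc (\<lambda>x y. ip (J x) y) (R z)"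
    "\<And>x y. (x, y) \<in> rel_resolvent_rel sc A z \<longleftrightarrow> y = R z x"
proof -
  obtain T where T: "bounded_op sc (\<lambda>x y. ip (J x) y) sc (\<lambda>x y. ip (J x) y) T"
    "\<And>x y. (x, y) \<in> rel_resolvent_rel sc A z \<longleftrightarrow> y = T x"
    using assms unfolding resolvent_set_def by blast
  then have "R z = T"
    unfolding resolvent_def by simp
  with T that show ?thesis by blast
qed

lemma resolvent_scale: "z \<in> rho \<Longrightarrow> R z (sc a x) = sc a (R z x)"
  by (elim resolvent_setE) (simp add: bounded_op_def Vector_Spaces.linear_iff)

lemma resolvent_bound:
  assumes "z \<in> rho"
  obtains C where "0 < C" "\<And>x. J.nrm (R z x) \<le> C * J.nrm x"
proof -
  obtain C where C: "\<And>x. J.nrm (R z x) \<le> C * J.nrm x"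
    using assms by (elim resolvent_setE) (auto simp: bounded_op_def)
  have "J.nrm (R z x) \<le> max C 1 * J.nrm x" for x
  proof -
    have "C * J.nrm x \<le> max C 1 * J.nrm x"
      using J.nrm_nonneg[of x] by (intro mult_right_mono) auto
    with C[of x] show ?thesis by linarith
  qed
  then show ?thesis
    using that[of "max C 1"] by simp
qed

lemma resolvent_mem_A:
  assumes "z \<in> rho"
  obtains g where "(R z x, g) \<in> A" "x = g - sc z (R z x)"
proof (rule resolvent_setE[OF assms])
  assume "\<And>x y. (x, y) \<in> rel_resolvent_rel sc A z \<longleftrightarrow> y = R z x"
  then have "(x, R z x) \<in> rel_resolvent_rel sc A z" by simp
  then show ?thesis
    unfolding rel_resolvent_rel_def by (auto intro: that)
qed

lemma resolvent_eqI:
  assumes "z \<in> rho" "(f, g) \<in> A"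
  shows "R z (g - sc z f) = f"
proof (rule resolvent_setE[OF assms(1)])
  assume "\<And>x y. (x, y) \<in> rel_resolvent_rel sc A z \<longleftrightarrow> y = R z x"
  moreover have "(g - sc z f, f) \<in> rel_resolvent_rel sc A z"
    using assms(2) unfolding rel_resolvent_rel_def by blast
  ultimately show ?thesis by simp
qed

lemma resolvent_identity:
  assumes z: "z \<in> rho" and w: "w \<in> rho"
  shows "sc (z - w) (R w (R z x)) = R z x - R w x"
proof -
  obtain gz where gz: "(R z x, gz) \<in> A" "x = gz - sc z (R z x)"
    using resolvent_mem_A[OF z] .
  obtain gw where gw: "(R w x, gw) \<in> A" "x = gw - sc w (R w x)"
    using resolvent_mem_A[OF w] .
  have "gz = x + sc z (R z x)" "gw = x + sc w (R w x)"
    using gz(2) gw(2) by (simp_all add: eq_diff_eq)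
  then have "gz - gw = sc z (R z x) - sc w (R w x)"
    by simp
  then have "(gz - gw) - sc w (R z x - R w x) = sc (z - w) (R z x)"
    by (simp add: scale_right_diff_distrib scale_left_diff_distrib)
  then have "R w (sc (z - w) (R z x)) = R z x - R w x"
    using resolvent_eqI[OF w diff_mem_A[OF gz(1) gw(1)]] by simp
  then show ?thesis
    using resolvent_scale[OF w] by simp
qed

lemma inner_resolvent_commute:
  assumes "z \<in> rho" "cnj z \<in> rho"
  shows "ip (R z x) y = ip x (R (cnj z) y)"
proof -
  obtain f where f: "(R z x, f) \<in> A" "x = f - sc z (R z x)"
    using resolvent_mem_A[OF assms(1)] .
  obtain g where g: "(R (cnj z) y, g) \<in> A" "y = g - sc (cnj z) (R (cnj z) y)"
    using resolvent_mem_A[OF assms(2)] .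
  have "ip f (R (cnj z) y) = ip (R z x) g"
    using f(1) g(1) by (rule inner_mem_A)
  then show ?thesis
    by (subst f(2), subst g(2)) (simp add: inner_diff_left inner_diff_right inner_scale_left inner_scale_right)
qed

lemma resolvent_local_bound:
  assumes z: "z \<in> rho" and w: "w \<in> rho"
    and C: "\<And>x. J.nrm (R z x) \<le> C * J.nrm x" and close: "cmod (w - z) * C \<le> 1/2"
  shows "J.nrm (R w x) \<le> 2 * C * J.nrm x"
proof -
  have "R w x = R z x + sc (w - z) (R z (R w x))"
    using resolvent_identity[OF w z, of x] by (simp add: algebra_simps)
  then have "J.nrm (R w x) \<le> J.nrm (R z x) + cmod (w - z) * J.nrm (R z (R w x))"
    using J.nrm_triangle_ineq J.nrm_scale by metis
  also have "\<dots> \<le> C * J.nrm x + (cmod (w - z) * C) * J.nrm (R w x)"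
  proof -
    have "cmod (w - z) * J.nrm (R z (R w x)) \<le> cmod (w - z) * (C * J.nrm (R w x))"
      using C[of "R w x"] by (rule mult_left_mono) simp
    with C[of x] show ?thesis
      by (metis add_mono mult.assoc)
  qed
  also have "\<dots> \<le> C * J.nrm x + (1/2) * J.nrm (R w x)"
    using mult_right_mono[OF close J.nrm_nonneg] by simp
  finally show ?thesis by simp
qed

lemma inner_resolvent_tendsto:
  assumes z: "z \<in> rho"
  shows "((\<lambda>u. ip (R u x) y) \<longlongrightarrow> ip (R z x) y) (at z within rho)"
proof -
  obtain C where "0 < C" and C: "\<And>x. J.nrm (R z x) \<le> C * J.nrm x"
    using resolvent_bound[OF z] by blast
  define K where "K = C * (2 * C * J.nrm x) * J.nrm y"
  have "cmod (ip (R u x) y - ip (R z x) y) \<le> cmod (u - z) * K"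
    if u: "u \<in> rho" and close: "cmod (u - z) * C \<le> 1/2" for u
  proof -
    have "ip (R u x) y - ip (R z x) y = ip (sc (u - z) (R z (R u x))) y"
      using resolvent_identity[OF u z, of x] by (simp add: inner_diff_left)
    then have "cmod (ip (R u x) y - ip (R z x) y) = cmod (u - z) * cmod (ip (R z (R u x)) y)"
      by (simp add: inner_scale_left norm_mult)
    also have "\<dots> \<le> cmod (u - z) * (J.nrm (R z (R u x)) * J.nrm y)"
      by (rule mult_left_mono[OF inner_bound norm_ge_zero])
    also have "\<dots> \<le> cmod (u - z) * (C * (2 * C * J.nrm x) * J.nrm y)"
    proof -
      have "J.nrm (R z (R u x)) \<le> C * J.nrm (R u x)"
        by (rule C)
      also have "\<dots> \<le> C * (2 * C * J.nrm x)"
        using resolvent_local_bound[OF z u C close] \<open>0 < C\<close> by (simp add: mult_left_mono)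
      finally show ?thesis
        by (intro mult_left_mono mult_right_mono) (simp_all add: J.nrm_nonneg)
    qed
    finally show ?thesis unfolding K_def .
  qed
  moreover have "cmod (u - z) * C \<le> 1/2" if "dist u z < 1 / (2 * C)" for u
    using that \<open>0 < C\<close> by (simp add: dist_norm field_simps)
  ultimately have "\<forall>u\<in>rho. u \<noteq> z \<and> dist u z < 1 / (2 * C) \<longrightarrow>
      cmod (ip (R u x) y - ip (R z x) y) \<le> cmod (u - z) * K"
    by blast
  then have "eventually (\<lambda>u. cmod (ip (R u x) y - ip (R z x) y) \<le> cmod (u - z) * K) (at z within rho)"
    unfolding eventually_at using \<open>0 < C\<close> by (intro exI[of _ "1 / (2 * C)"] conjI) simp_all
  moreover have "((\<lambda>u. u - z) \<longlongrightarrow> 0) (at z within rho)"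
    by (rule LIM_zero[OF tendsto_ident_at])
  then have "((\<lambda>u. cmod (u - z) * K) \<longlongrightarrow> 0) (at z within rho)"
    by (rule tendsto_mult_left_zero[OF tendsto_norm_zero])
  ultimately show ?thesis
    by (rule LIM_zero_cancel[OF Lim_null_comparison])
qed

end

section \<open>Minimal representations\<close>

lemma open_holo_dom: "open (holo_dom ip Q)"
proof (subst open_subopen, intro ballI)
  fix z
  assume "z \<in> holo_dom ip Q"
  then obtain U where "open U" "z \<in> U" "\<forall>h g. (\<lambda>w. ip (Q w h) g) holomorphic_on U"
    unfolding holo_dom_def by blast
  then show "\<exists>T. open T \<and> z \<in> T \<and> T \<subseteq> holo_dom ip Q"
    unfolding holo_dom_def by blast
qed

locale minimally_represented =
  fixes scH :: "complex \<Rightarrow> 'h::ab_group_add \<Rightarrow> 'h" and ipH :: "'h \<Rightarrow> 'h \<Rightarrow> complex"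
    and Q :: "complex \<Rightarrow> 'h \<Rightarrow> 'h"
    and scK :: "complex \<Rightarrow> 'k::ab_group_add \<Rightarrow> 'k" and ipK :: "'k \<Rightarrow> 'k \<Rightarrow> complex"
    and J :: "'k \<Rightarrow> 'k" and A :: "('k \<times> 'k) set" and \<Gamma> :: "'h \<Rightarrow> 'k" and z0 :: complex
  assumes hilbert_space: "hilbert_space scH ipH"
    and minimal: "minimal_representation scH ipH Q scK ipK J A \<Gamma> z0"
    and cnj_holo_dom: "z \<in> holo_dom ipH Q \<Longrightarrow> cnj z \<in> holo_dom ipH Q"
begin

abbreviation DQ :: "complex set" where "DQ \<equiv> holo_dom ipH Q"

abbreviation G :: "complex \<Rightarrow> 'h \<Rightarrow> 'k" where "G \<equiv> Gamma_z scK A \<Gamma> z0"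

sublocale H: hilbert_form scH ipH
  by (rule hilbert_space_imp_hilbert_form[OF hilbert_space])

sublocale K: selfadjoint_rel scK ipK J A
proof -
  have "pontryagin_space scK ipK J" "selfadjoint_relation ipK A"
    using minimal unfolding minimal_representation_def by blast+
  moreover from this(1) have "vector_space scK" "hermitian_form scK ipK"
    unfolding pontryagin_space_def by blast+
  ultimately show "selfadjoint_rel scK ipK J A"
    by (simp add: selfadjoint_rel_def selfadjoint_rel_axioms_def pontryagin_def
        pontryagin_axioms_def sesquilinear_form_def sesquilinear_form_axioms_def)
qed

lemma resolvent_set_eq: "K.rho = DQ"
  using minimal unfolding minimal_representation_def by blast

lemma inner_Gamma_adjoint: "ipH (op_adjoint ipH ipK \<Gamma> y) g = ipK y (\<Gamma> g)"
proof -
  obtain C where linear: "Vector_Spaces.linear scH scK \<Gamma>" and C: "\<And>x. K.J.nrm (\<Gamma> x) \<le> C * H.nrm x"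
    using minimal unfolding minimal_representation_def bounded_op_def by blast
  have add: "ipK (\<Gamma> (x + x')) y = ipK (\<Gamma> x) y + ipK (\<Gamma> x') y" for x x'
    using linear by (simp add: Vector_Spaces.linear_iff K.inner_add_left)
  have scale: "ipK (\<Gamma> (scH a x)) y = a * ipK (\<Gamma> x) y" for a x
    using linear by (simp add: Vector_Spaces.linear_iff K.inner_scale_left)
  have bound: "cmod (ipK (\<Gamma> x) y) \<le> C * K.J.nrm y * H.nrm x" for x
  proof -
    have "cmod (ipK (\<Gamma> x) y) \<le> K.J.nrm (\<Gamma> x) * K.J.nrm y"
      by (rule K.inner_bound)
    also have "\<dots> \<le> C * H.nrm x * K.J.nrm y"
      using C[of x] K.J.nrm_nonneg[of y] by (rule mult_right_mono)
    finally show ?thesis by (simp add: mult_ac)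
  qed
  obtain u where u: "\<And>x. ipK (\<Gamma> x) y = ipH x u"
    using H.Riesz_representation[of "\<lambda>x. ipK (\<Gamma> x) y", OF add scale bound] by blast
  have "u' = u" if "\<forall>x. ipK (\<Gamma> x) y = ipH x u'" for u'
  proof -
    have "ipH (u' - u) (u' - u) = 0"
      using that u[of "u' - u"] by (simp add: H.inner_diff_right)
    then have "u' - u = 0"
      by (rule H.inner_self_eq_0)
    then show ?thesis by simp
  qed
  then have "op_adjoint ipH ipK \<Gamma> y = u"
    unfolding op_adjoint_def using u by (intro the_equality) auto
  then show ?thesis
    using u[of g] H.inner_commute[of g u] K.inner_commute[of "\<Gamma> g" y] by simp
qed

lemma inner_Gamma_z_Gamma:
  "ipK (G u h) (\<Gamma> g) = ipK (\<Gamma> h) (\<Gamma> g) + (u - z0) * ipK (K.R u (\<Gamma> h)) (\<Gamma> g)"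
  unfolding Gamma_z_def by (simp add: K.inner_add_left K.inner_scale_left)

lemma inner_Q:
  assumes "z \<in> DQ"
  shows "ipH (Q z h) g = ipH (op_adjoint ipH ipH (Q z0) h) g + (z - cnj z0) * ipK (G z h) (\<Gamma> g)"
proof -
  have "Q z h = op_adjoint ipH ipH (Q z0) h + scH (z - cnj z0) (op_adjoint ipH ipK \<Gamma> (G z h))"
    using minimal assms resolvent_set_eq unfolding minimal_representation_def by blast
  then show ?thesis
    by (simp add: H.inner_add_left H.inner_scale_left inner_Gamma_adjoint)
qed

lemma inner_Gamma_z_kernel:
  assumes z: "z \<in> DQ" and w: "w \<in> DQ" and "z \<noteq> cnj w"
  shows "(z - cnj w) * ipK (G z h) (G w g) = ipH (Q z h) g - ipH (Q (cnj w) h) g"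
proof -
  have "z \<in> K.rho" "cnj w \<in> K.rho" "cnj (cnj w) \<in> K.rho"
    using z w cnj_holo_dom resolvent_set_eq by auto
  note rho = this
  define P where "P = ipK (\<Gamma> h) (\<Gamma> g)"
  define X1 where "X1 = ipK (K.R z (\<Gamma> h)) (\<Gamma> g)"
  define X2 where "X2 = ipK (K.R (cnj w) (\<Gamma> h)) (\<Gamma> g)"
  define Y where "Y = ipK (K.R (cnj w) (K.R z (\<Gamma> h))) (\<Gamma> g)"
  have eY: "(z - cnj w) * Y = X1 - X2"
    using arg_cong[OF K.resolvent_identity[OF rho(1,2), of "\<Gamma> h"], of "\<lambda>v. ipK v (\<Gamma> g)"]
    unfolding Y_def X1_def X2_def by (simp add: K.inner_scale_left K.inner_diff_left)
  have e1: "ipK (G z h) (G w g) = P + cnj (w - z0) * X2 + (z - z0) * X1 + (z - z0) * cnj (w - z0) * Y"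
  proof -
    have "ipK (\<Gamma> h) (K.R w (\<Gamma> g)) = X2" "ipK (K.R z (\<Gamma> h)) (K.R w (\<Gamma> g)) = Y"
      using K.inner_resolvent_commute[OF rho(2,3)] unfolding X2_def Y_def by simp_all
    moreover have "ipK (G z h) (G w g) = P + cnj (w - z0) * ipK (\<Gamma> h) (K.R w (\<Gamma> g))
        + (z - z0) * X1 + (z - z0) * cnj (w - z0) * ipK (K.R z (\<Gamma> h)) (K.R w (\<Gamma> g))"
      unfolding Gamma_z_def P_def X1_def
      by (simp only: K.inner_add_left K.inner_add_right K.inner_scale_left K.inner_scale_right)
        (simp add: algebra_simps)
    ultimately show ?thesis by simp
  qed
  have "(z - cnj w) * ipK (G z h) (G w g) =
      (z - cnj w) * (P + cnj (w - z0) * X2 + (z - z0) * X1) + (z - z0) * cnj (w - z0) * ((z - cnj w) * Y)"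
    unfolding e1 by (simp add: algebra_simps)
  also have "\<dots> = (z - cnj z0) * (P + (z - z0) * X1) - (cnj w - cnj z0) * (P + (cnj w - z0) * X2)"
    unfolding eY complex_cnj_diff by (simp add: algebra_simps)
  also have "\<dots> = ipH (Q z h) g - ipH (Q (cnj w) h) g"
    using inner_Q[OF z] inner_Q[OF cnj_holo_dom[OF w]]
    unfolding inner_Gamma_z_Gamma P_def X1_def X2_def by simp
  finally show ?thesis .
qed

lemma inner_Gamma_z_cnj_tendsto:
  assumes z: "z \<in> DQ"
  shows "((\<lambda>u. ipK x (G (cnj u) g)) \<longlongrightarrow> ipK x (G (cnj z) g)) (at z)"
proof -
  have eq: "ipK x (G (cnj u) g) = ipK x (\<Gamma> g) + (u - cnj z0) * ipK (K.R u x) (\<Gamma> g)"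
    if "u \<in> DQ" for u
    using K.inner_resolvent_commute[of u x "\<Gamma> g"] that cnj_holo_dom resolvent_set_eq
    unfolding Gamma_z_def by (simp add: K.inner_add_right K.inner_scale_right)
  have "((\<lambda>u. ipK (K.R u x) (\<Gamma> g)) \<longlongrightarrow> ipK (K.R z x) (\<Gamma> g)) (at z)"
    using K.inner_resolvent_tendsto[of z x "\<Gamma> g"] z
    by (simp add: resolvent_set_eq at_within_open[OF _ open_holo_dom])
  then have "((\<lambda>u. ipK x (\<Gamma> g) + (u - cnj z0) * ipK (K.R u x) (\<Gamma> g))
      \<longlongrightarrow> ipK x (G (cnj z) g)) (at z)"
    unfolding eq[OF z] by (intro tendsto_intros)
  moreover have "eventually (\<lambda>u. ipK x (\<Gamma> g) + (u - cnj z0) * ipK (K.R u x) (\<Gamma> g) =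
      ipK x (G (cnj u) g)) (at z)"
    using eventually_at_in_open'[OF open_holo_dom z] by eventually_elim (simp add: eq)
  ultimately show ?thesis
    by (rule Lim_transform_eventually)
qed

lemma eq_0_if_orthogonal_Gamma_z:
  assumes orth: "\<And>w g. w \<in> DQ \<Longrightarrow> ipK x (G w g) = 0"
  shows "x = 0"
proof (rule K.eq_0_if_inner_J_eq_0)
  have span: "ipK x y = 0" if "y \<in> module.span scK {G w g | w g. w \<in> K.rho}" for y
    using that
  proof (induct rule: K.span_induct)
    case base
    show ?case
      unfolding K.subspace_def by (simp add: K.inner_add_right K.inner_scale_right)
  next
    case (step y)
    then show ?case
      using orth resolvent_set_eq by blast
  qed
  have "cmod (ipK x (J x)) \<le> 0 + e" if "0 < e" for e
  proof -
    have "0 < e / (K.J.nrm x + 1)"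
      using that K.J.nrm_nonneg[of x] by simp
    then obtain y where y: "y \<in> module.span scK {G w g | w g. w \<in> K.rho}"
      and close: "K.J.nrm (J x - y) < e / (K.J.nrm x + 1)"
      using minimal unfolding minimal_representation_def by blast
    have "ipK x (J x) = ipK x (J x - y)"
      using span[OF y] by (simp add: K.inner_diff_right)
    then have "cmod (ipK x (J x)) \<le> K.J.nrm x * K.J.nrm (J x - y)"
      by (simp add: K.inner_bound)
    also have "\<dots> \<le> K.J.nrm x * (e / (K.J.nrm x + 1))"
      by (rule mult_left_mono) (use close K.J.nrm_nonneg in auto)
    also have "\<dots> \<le> e"
      using that K.J.nrm_nonneg[of x] by (simp add: field_simps)
    finally show ?thesis by simp
  qed
  then show "ipK x (J x) = 0"
    using field_le_epsilon[of "cmod (ipK x (J x))" 0] by simp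
qed

lemma Gamma_z_eq_0_if_Q_const:
  assumes const: "\<And>u v g. u \<in> DQ \<Longrightarrow> v \<in> DQ \<Longrightarrow> ipH (Q u h) g = ipH (Q v h) g"
    and z: "z \<in> DQ"
  shows "G z h = 0"
proof (rule eq_0_if_orthogonal_Gamma_z)
  have off_diagonal: "ipK (G z h) (G w g) = 0" if w: "w \<in> DQ" and "z \<noteq> cnj w" for w g
    using inner_Gamma_z_kernel[OF z w, of h g] const[OF z cnj_holo_dom[OF w], of g] \<open>z \<noteq> cnj w\<close>
    by simp
  have diagonal: "ipK (G z h) (G (cnj z) g) = 0" for g
  proof -
    have "eventually (\<lambda>u. ipK (G z h) (G (cnj u) g) = 0) (at z)"
      using eventually_at_in_open[OF open_holo_dom z]
      by eventually_elim (auto intro: off_diagonal cnj_holo_dom)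
    then have "((\<lambda>u. ipK (G z h) (G (cnj u) g)) \<longlongrightarrow> 0) (at z)"
      by (rule tendsto_eventually)
    then show ?thesis
      using tendsto_unique[OF at_neq_bot inner_Gamma_z_cnj_tendsto[OF z]] by blast
  qed
  show "ipK (G z h) (G w g) = 0" if "w \<in> DQ" for w g
    using that off_diagonal diagonal[of g] by (cases "z = cnj w") auto
qed

end

theorem corollary6:
  fixes scH :: "complex \<Rightarrow> 'h::ab_group_add \<Rightarrow> 'h" and ipH :: "'h \<Rightarrow> 'h \<Rightarrow> complex"
    and Q :: "complex \<Rightarrow> 'h \<Rightarrow> 'h" and \<kappa> :: nat
    and scK :: "complex \<Rightarrow> 'k::ab_group_add \<Rightarrow> 'k" and ipK :: "'k \<Rightarrow> 'k \<Rightarrow> complex"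
    and J :: "'k \<Rightarrow> 'k" and A :: "('k \<times> 'k) set" and \<Gamma> :: "'h \<Rightarrow> 'k"
    and z0 z0' :: complex and h :: 'h
  assumes "hilbert_space scH ipH"
    and "N_kappa scH ipH \<kappa> Q"
    and "minimal_representation scH ipH Q scK ipK J A \<Gamma> z0"
    and "z0' \<in> holo_dom ipH Q"
    and "h \<noteq> 0"
    and "\<forall>w\<in>holo_dom ipH Q. \<forall>g. kerQ ipH Q z0' w h g = 0"
  shows "\<forall>z\<in>holo_dom ipH Q. Gamma_z scK A \<Gamma> z0 z h = 0"
proof -
  interpret minimally_represented scH ipH Q scK ipK J A \<Gamma> z0
    using assms(1-3) by unfold_locales (auto simp: N_kappa_def)
  have const: "ipH (Q u h) g = ipH (Q z0' h) g" if "u \<in> DQ" for u g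
  proof (cases "u = z0'")
    case False
    then have "z0' \<noteq> cnj (cnj u)" by simp
    moreover have "kerQ ipH Q z0' (cnj u) h g = 0"
      using assms(6) cnj_holo_dom[OF that] by blast
    ultimately show ?thesis
      using False by (simp add: kerQ_def H.inner_diff_left)
  qed simp
  then have "ipH (Q u h) g = ipH (Q v h) g" if "u \<in> DQ" "v \<in> DQ" for u v g
    using const[OF that(1)] const[OF that(2)] by simp
  then show ?thesis
    using Gamma_z_eq_0_if_Q_const by blast
qed

end
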